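(* Let $(V,g)$ be an $n$-dimensional Euclidean vector space, let $\mathfrak{R}\colon \Lambda^2 V \to \Lambda^2 V$ be an algebraic curvature operator with eigenvalues $\lambda_1 \leq \ldots \leq \lambda_{\binom{n}{2}}$, and let $T \in \mathcal{T}^{(0,k)}(V)$. Suppose there is a real number $C \geq 1$ such that $$ |LT|^2 \leq \frac{1}{C} |\hat{T}|^2 |L|^2 \quad \text{for all } L \in \mathfrak{so}(V). $$ Let $\kappa \leq 0$. If $\frac{1}{\lfloor C \rfloor}(\lambda_1 + \ldots + \lambda_{\lfloor C \rfloor}) \geq \kappa$, then $g(\mathfrak{R}(\hat{T}), \hat{T}) \geq \kappa |\hat{T}|^2$. If $\lambda_1 + \ldots + \lambda_{\lfloor C \rfloor} > 0$, then $g(\mathfrak{R}(\hat{T}), \hat{T}) > 0$ unless $\hat{T} = 0$.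
   Context: $\mathcal{T}^{(0,k)}(V)$ is the space of $(0,k)$-tensors, with norm $|T|^2 = \sum_{i_1,\ldots,i_k} T_{i_1\ldots i_k}^2$ in any orthonormal basis. $\mathfrak{so}(V)$ is identified with $\Lambda^2 V$ via $(X \wedge Y)(Z) = g(X,Z)Y - g(Y,Z)X$, and $\Lambda^2 V$ carries the inner product for which $\{e_i \wedge e_j\}_{i<j}$ is orthonormal whenever $\{e_i\}$ is; $|L|$ is the corresponding norm. For $L \in \mathfrak{so}(V)$, $(LT)(X_1,\ldots,X_k) = -\sum_{i=1}^k T(X_1,\ldots,LX_i,\ldots,X_k)$. The tensor $\hat{T} \in \Lambda^2 V \otimes \mathcal{T}^{(0,k)}(V)$ is defined by $g(L, \hat{T}(X_1,\ldots,X_k)) = (LT)(X_1,\ldots,X_k)$ for all $L$; equivalently $\hat{T} = \sum_\alpha \Xi_\alpha \otimes \Xi_\alpha T$ for any orthonormal basis $\{\Xi_\alpha\}$ of $\Lambda^2 V$, so $|\hat{T}|^2 = \sum_\alpha |\Xi_\alpha T|^2$. Further $\mathfrak{R}(\hat{T}) = \sum_\alpha \mathfrak{R}(\Xi_\alpha) \otimes \Xi_\alpha T$ and $g(\mathfrak{R}(\hat{T}),\hat{T}) = \sum_{\alpha,\beta} g(\mathfrak{R}(\Xi_\alpha),\Xi_\beta)\, g(\Xi_\alpha T, \Xi_\beta T)$. An algebraic curvature operator is a self-adjoint map $\mathfrak{R}$ on $\Lambda^2 V$ whose associated tensor $\operatorname{Rm}(x,y,z,w) = g(\mathfrak{R}(x\wedge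 y), z \wedge w)$ satisfies the first Bianchi identity. *)

theory Defs
  imports "HOL-Analysis.Analysis"
begin

text \<open>V = real^'n with its standard Euclidean inner product g; e i is the standard
  orthonormal basis. Elements of so(V) = Lambda^2 V are represented as skew-symmetric
  matrices (acting on V by matrix-vector product).\<close>

definition e :: "'n::finite \<Rightarrow> real^'n" where
  "e i = axis i 1"

text \<open>(X \<and> Y)(Z) = g(X,Z) Y - g(Y,Z) X, as a matrix.\<close>
definition wedge :: "real^'n::finite \<Rightarrow> real^'n \<Rightarrow> real^'n^'n" where
  "wedge X Y = (\<chi> a b. Y $ a * X $ b - X $ a * Y $ b)"

definition skew :: "real^'n::finite^'n \<Rightarrow> bool" where
  "skew A \<longleftrightarrow> transpose A = - A"

text \<open>Inner product on Lambda^2 V making e_i \<and> e_j (i<j) orthonormal.\<close>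
definition lam_inner :: "real^'n::finite^'n \<Rightarrow> real^'n^'n \<Rightarrow> real" where
  "lam_inner A B = (1/2) * (\<Sum>a\<in>UNIV. \<Sum>b\<in>UNIV. A $ a $ b * B $ a $ b)"

text \<open>(0,k)-tensors: functions of lists of vectors, multilinear on lists of length k.\<close>
definition tensor :: "nat \<Rightarrow> ((real^'n::finite) list \<Rightarrow> real) \<Rightarrow> bool" where
  "tensor k T \<longleftrightarrow> (\<forall>Xs i. length Xs = k \<longrightarrow> i < k \<longrightarrow> linear (\<lambda>v. T (Xs[i := v])))"

definition tnorm2 :: "nat \<Rightarrow> ((real^'n::finite) list \<Rightarrow> real) \<Rightarrow> real" where
  "tnorm2 k T = (\<Sum>is\<in>{is::'n list. length is = k}. (T (map e is))\<^sup>2)"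

definition act :: "real^'n::finite^'n \<Rightarrow> ((real^'n) list \<Rightarrow> real) \<Rightarrow> (real^'n) list \<Rightarrow> real" where
  "act L T Xs = - (\<Sum>i<length Xs. T (Xs[i := L *v (Xs ! i)]))"

text \<open>\<hat>T(X_1..X_k) in Lambda^2 V: g(L, \<hat>T(X)) = (L T)(X). Expanded in the
  orthonormal basis {e_a \<and> e_b}_{a<b}; the factor 1/2 accounts for summing over all
  ordered pairs (a,b).\<close>
definition hat :: "((real^'n::finite) list \<Rightarrow> real) \<Rightarrow> (real^'n) list \<Rightarrow> real^'n^'n" where
  "hat T Xs = (\<Sum>a\<in>UNIV. \<Sum>b\<in>UNIV.
      ((1/2) * act (wedge (e a) (e b)) T Xs) *\<^sub>R wedge (e a) (e b))"

definition hat_norm2 :: "nat \<Rightarrow> ((real^'n::finite) list \<Rightarrow> real) \<Rightarrow> real" where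
  "hat_norm2 k T = (\<Sum>is\<in>{is::'n list. length is = k}.
      lam_inner (hat T (map e is)) (hat T (map e is)))"

definition curv_pairing ::
  "(real^'n::finite^'n \<Rightarrow> real^'n^'n) \<Rightarrow> nat \<Rightarrow> ((real^'n) list \<Rightarrow> real) \<Rightarrow> real" where
  "curv_pairing R k T = (\<Sum>is\<in>{is::'n list. length is = k}.
      lam_inner (R (hat T (map e is))) (hat T (map e is)))"

definition alg_curv_op :: "(real^'n::finite^'n \<Rightarrow> real^'n^'n) \<Rightarrow> bool" where
  "alg_curv_op R \<longleftrightarrow>
     (\<forall>A. skew A \<longrightarrow> skew (R A)) \<and>
     (\<forall>A B a b. skew A \<longrightarrow> skew B \<longrightarrow> R (a *\<^sub>R A + b *\<^sub>R B) = a *\<^sub>R R A + b *\<^sub>R R B) \<and>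
     (\<forall>A B. skew A \<longrightarrow> skew B \<longrightarrow> lam_inner (R A) B = lam_inner A (R B)) \<and>
     (\<forall>x y z w. lam_inner (R (wedge x y)) (wedge z w)
                + lam_inner (R (wedge y z)) (wedge x w)
                + lam_inner (R (wedge z x)) (wedge y w) = 0)"

text \<open>lam 1 \<le> ... \<le> lam N (N = n choose 2) are the eigenvalues of R, listed with
  multiplicity: they are the eigenvalues of an orthonormal eigenbasis of Lambda^2 V.\<close>
definition curv_eigenvalues :: "(real^'n::finite^'n \<Rightarrow> real^'n^'n) \<Rightarrow> (nat \<Rightarrow> real) \<Rightarrow> bool" where
  "curv_eigenvalues R lam \<longleftrightarrow>
     (let N = CARD('n) choose 2 in
      (\<forall>i j. 1 \<le> i \<longrightarrow> i \<le> j \<longrightarrow> j \<le> N \<longrightarrow> lam i \<le> lam j) \<and>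
      (\<exists>\<Xi> :: nat \<Rightarrow> real^'n^'n.
         (\<forall>\<alpha>\<in>{1..N}. skew (\<Xi> \<alpha>) \<and> R (\<Xi> \<alpha>) = lam \<alpha> *\<^sub>R \<Xi> \<alpha>) \<and>
         (\<forall>\<alpha>\<in>{1..N}. \<forall>\<beta>\<in>{1..N}. lam_inner (\<Xi> \<alpha>) (\<Xi> \<beta>) = (if \<alpha> = \<beta> then 1 else 0))))"

end

theory Submission
  imports Defs
begin

text \<open>Expand \<open>\<hat>T\<close> in an orthonormal eigenbasis \<open>\<Xi>\<^sub>\<alpha>\<close> of \<open>\<R>\<close>. Since
  \<open>g(L, \<hat>T) = L T\<close>, the weights \<open>w\<^sub>\<alpha> = |\<Xi>\<^sub>\<alpha> T|\<^sup>2\<close> satisfy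
  \<open>|\<hat>T|\<^sup>2 = \<Sum> w\<^sub>\<alpha>\<close> and \<open>g(\<R>(\<hat>T), \<hat>T) = \<Sum> \<lambda>\<^sub>\<alpha> w\<^sub>\<alpha>\<close>, and the hypothesis with
  \<open>L = \<Xi>\<^sub>\<alpha>\<close> gives \<open>0 \<le> w\<^sub>\<alpha> \<le> |\<hat>T|\<^sup>2 / C\<close>. A weighted sum of increasing
  numbers with such capped weights is smallest when the weight sits on the first indices, which gives
  \<open>\<Sum> \<lambda>\<^sub>\<alpha> w\<^sub>\<alpha> \<ge> |\<hat>T|\<^sup>2 (\<lambda>\<^sub>1 + ... + \<lambda>\<^sub>m) / m\<close> for \<open>m = \<lfloor>C\<rfloor>\<close>.
  For the strict statement, \<open>\<hat>T(X) \<noteq> 0\<close> gives \<open>(\<hat>T(X) T)(X) = |\<hat>T(X)|\<^sup>2 > 0\<close>, so by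
  multilinearity \<open>\<hat>T\<close> is nonzero on some tuple of basis vectors and \<open>|\<hat>T|\<^sup>2 > 0\<close>.\<close>

lemma e_nth: "e a $ i = (if i = a then 1 else 0)"
  by (simp add: e_def axis_def)

lemma lam_inner_eq_inner: "lam_inner A B = (A \<bullet> B) / 2"
  by (simp add: lam_inner_def inner_vec_def)

lemma skew_iff: "skew A \<longleftrightarrow> (\<forall>i j. A $ j $ i = - A $ i $ j)"
  unfolding skew_def transpose_def by (auto simp: vec_eq_iff)

lemma subspace_skew: "subspace {A::real^'n::finite^'n. skew A}"
proof -
  have "transpose (A + B) = transpose A + transpose B" for A B :: "real^'n^'n"
    by (simp add: transpose_def vec_eq_iff)
  then show ?thesis
    by (simp add: subspace_def skew_def transpose_scalar) (simp add: transpose_def vec_eq_iff)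
qed

lemma skewD: "skew A \<Longrightarrow> A $ j $ i = - A $ i $ j"
  unfolding skew_iff by blast

lemma skew_sum: "(\<And>x. x \<in> S \<Longrightarrow> skew (f x)) \<Longrightarrow> skew (\<Sum>x\<in>S. f x)"
  using subspace_sum[OF subspace_skew, of S f] by simp

lemma skew_scaleR: "skew A \<Longrightarrow> skew (c *\<^sub>R A)"
  using subspace_scale[OF subspace_skew] by simp

lemma skew_wedge: "skew (wedge X Y)"
  by (simp add: skew_iff wedge_def)

lemma skew_hat: "skew (hat T Xs)"
  unfolding hat_def by (intro skew_sum skew_scaleR skew_wedge)

lemma wedge_nth: "wedge X Y $ i $ j = Y $ i * X $ j - X $ i * Y $ j"
  by (simp add: wedge_def)

lemma wedge_e_nth:
  "wedge (e a) (e b) $ i $ j = (if i = b \<and> j = a then 1 else 0) - (if i = a \<and> j = b then 1 else 0)"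
  unfolding wedge_nth e_nth by (cases "i = b"; cases "j = a"; cases "i = a"; cases "j = b") simp_all

lemma sum_sum_if_eq:
  fixes f :: "'a::finite \<Rightarrow> 'b::finite \<Rightarrow> 'c::comm_monoid_add"
  shows "(\<Sum>x\<in>UNIV. \<Sum>y\<in>UNIV. if x = p \<and> y = q then f x y else 0) = f p q"
proof -
  have "(\<Sum>y\<in>UNIV. if x = p \<and> y = q then f x y else 0) = (if x = p then f x q else 0)" for x
    by (cases "x = p") simp_all
  then show ?thesis by simp
qed

lemma mult_wedge_e_nth:
  "c * wedge (e a) (e b) $ i $ j = (if i = b \<and> j = a then c else 0) - (if i = a \<and> j = b then c else 0)"
  unfolding wedge_e_nth right_diff_distrib by (simp only: if_distrib[of "(*) c"] mult_1_right mult_zero_right)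

lemma lam_inner_wedge_e:
  assumes "skew L" shows "lam_inner L (wedge (e a) (e b)) = - L $ a $ b"
proof -
  have "lam_inner L (wedge (e a) (e b)) = (L $ b $ a - L $ a $ b) / 2"
    by (simp only: lam_inner_def mult_wedge_e_nth sum_subtractf sum_sum_if_eq)
  then show ?thesis using skewD[OF assms, of b a] by simp
qed

lemma skew_wedge_expansion:
  assumes "skew L"
  shows "L = (\<Sum>a\<in>UNIV. \<Sum>b\<in>UNIV. (- L $ a $ b / 2) *\<^sub>R wedge (e a) (e b))"
proof (subst vec_eq_iff, intro allI, subst vec_eq_iff, intro allI)
  fix i j
  have "(\<Sum>a\<in>UNIV. \<Sum>b\<in>UNIV. (- L $ a $ b / 2) *\<^sub>R wedge (e a) (e b)) $ i $ j
      = (\<Sum>a\<in>UNIV. \<Sum>b\<in>UNIV. (- L $ a $ b / 2) * wedge (e a) (e b) $ i $ j)"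
    by (simp only: sum_component vector_scaleR_component real_scaleR_def)
  also have "\<dots> = (\<Sum>a\<in>UNIV. \<Sum>b\<in>UNIV. (if a = j \<and> b = i then - L $ a $ b / 2 else 0)
                                     - (if a = i \<and> b = j then - L $ a $ b / 2 else 0))"
    unfolding mult_wedge_e_nth by (intro sum.cong refl arg_cong2[where f=minus] if_cong) auto
  also have "\<dots> = (L $ i $ j - L $ j $ i) / 2"
    by (simp only: sum_subtractf sum_sum_if_eq) simp
  also have "\<dots> = L $ i $ j"
    using skewD[OF assms, of i j] by simp
  finally show "L $ i $ j = (\<Sum>a\<in>UNIV. \<Sum>b\<in>UNIV. (- L $ a $ b / 2) *\<^sub>R wedge (e a) (e b)) $ i $ j"
    by (rule sym)
qed

lemma linear_matrix_vector_mult_left: "linear (\<lambda>L::real^'n::finite^'m::finite. L *v x)"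
  by (rule linearI) (simp_all add: matrix_vector_mult_add_rdistrib scaleR_matrix_vector_assoc)

lemma act_linear:
  assumes "tensor k T" "length Xs = k"
  shows "linear (\<lambda>L. act L T Xs)"
proof -
  have "linear (\<lambda>L. T (Xs[i := L *v Xs ! i]))" if "i < length Xs" for i
    using linear_compose[OF linear_matrix_vector_mult_left, of "\<lambda>v. T (Xs[i := v])"] assms that
    by (simp add: tensor_def o_def)
  then show ?thesis
    unfolding act_def by (intro linear_compose_neg linear_compose_sum) auto
qed

lemma act_eq_lam_inner_hat:
  assumes "skew L" "tensor k T" "length Xs = k"
  shows "act L T Xs = lam_inner L (hat T Xs)"
proof -
  interpret act: linear "\<lambda>L. act L T Xs" by (rule act_linear[OF assms(2,3)])
  have "act L T Xs = act (\<Sum>a\<in>UNIV. \<Sum>b\<in>UNIV. (- L $ a $ b / 2) *\<^sub>R wedge (e a) (e b)) T Xs"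
    using skew_wedge_expansion[OF assms(1)] by simp
  also have "\<dots> = (\<Sum>a\<in>UNIV. \<Sum>b\<in>UNIV. (- L $ a $ b / 2) * act (wedge (e a) (e b)) T Xs)"
    by (simp only: act.sum act.scale real_scaleR_def)
  also have "\<dots> = (\<Sum>a\<in>UNIV. \<Sum>b\<in>UNIV. (1/2 * act (wedge (e a) (e b)) T Xs) * lam_inner L (wedge (e a) (e b)))"
    by (simp add: lam_inner_wedge_e[OF assms(1)] mult_ac)
  also have "\<dots> = lam_inner L (hat T Xs)"
    by (simp add: hat_def lam_inner_eq_inner inner_sum_right sum_divide_distrib)
  finally show ?thesis .
qed

lemma tensor_act:
  fixes L :: "real^'n::finite^'n"
  assumes "tensor k T"
  shows "tensor k (act L T)"
  unfolding tensor_def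
proof (intro allI impI)
  fix Xs :: "(real^'n) list" and i
  assume len: "length Xs = k" and i: "i < k"
  define g where "g j v = (if j = i then T (Xs[i := L *v v]) else T ((Xs[j := L *v Xs ! j])[i := v]))" for j v
  have act_eq: "act L T (Xs[i := v]) = - (\<Sum>j<k. g j v)" for v
    unfolding act_def g_def using len i
    by (auto intro!: sum.cong simp: list_update_swap nth_list_update)
  have "linear (g j)" if "j < k" for j
  proof (cases "j = i")
    case True
    then show ?thesis
      using linear_compose[OF matrix_vector_mul_linear[of L], of "\<lambda>v. T (Xs[i := v])"] assms len i
      by (simp add: g_def[abs_def] tensor_def o_def)
  next
    case False
    then show ?thesis using assms len i by (simp add: g_def[abs_def] tensor_def)
  qed
  then have "linear (\<lambda>v. - (\<Sum>j<k. g j v))"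
    by (intro linear_compose_neg linear_compose_sum) auto
  then show "linear (\<lambda>v. act L T (Xs[i := v]))" by (simp add: act_eq)
qed

lemma tensor_slot_expansion:
  assumes "tensor k F" "length Xs = k" "i < k"
  shows "F Xs = (\<Sum>a\<in>UNIV. Xs ! i $ a * F (Xs[i := e a]))"
proof -
  interpret slot: linear "\<lambda>v. F (Xs[i := v])" using assms by (simp add: tensor_def)
  have "Xs ! i = (\<Sum>a\<in>UNIV. Xs ! i $ a *\<^sub>R e a)"
    using basis_expansion[of "Xs ! i"] by (simp add: e_def scalar_mult_eq_scaleR)
  then have "F Xs = F (Xs[i := (\<Sum>a\<in>UNIV. Xs ! i $ a *\<^sub>R e a)])"
    by (metis list_update_id)
  then show ?thesis by (simp add: slot.sum slot.scale)
qed

lemma tensor_eq_0_if_eq_0_on_basis: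
  assumes F: "tensor k F" and basis: "\<And>is. length is = k \<Longrightarrow> F (map e is) = 0" and "length Xs = k"
  shows "F Xs = 0"
proof -
  have "F Xs = 0" if "length Xs = k" "\<forall>i\<in>{j..<k}. Xs ! i \<in> range e" "j \<le> k" for j Xs
    using that
  proof (induction j arbitrary: Xs)
    case 0
    then have "Xs = map e (map (inv e) Xs)"
      by (auto intro!: nth_equalityI simp: f_inv_into_f)
    then show ?case using basis[of "map (inv e) Xs"] 0 by (metis length_map)
  next
    case (Suc j)
    have "F (Xs[j := e a]) = 0" for a
      using Suc by (intro Suc.IH) (auto simp: nth_list_update)
    moreover have "j < k" using Suc.prems(3) by simp
    ultimately show ?case using tensor_slot_expansion[OF F Suc.prems(1), of j] by simp
  qed
  from this[of Xs k] assms(3) show ?thesis by simp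
qed

lemma alg_curv_op_sum:
  assumes R: "alg_curv_op R" and "finite S" "\<And>x. x \<in> S \<Longrightarrow> skew (M x)"
  shows "R (\<Sum>x\<in>S. c x *\<^sub>R M x) = (\<Sum>x\<in>S. c x *\<^sub>R R (M x))"
  using assms(2,3)
proof (induction S rule: finite_induct)
  case empty
  have "R (0 *\<^sub>R 0 + 0 *\<^sub>R 0) = 0 *\<^sub>R R 0 + 0 *\<^sub>R R 0"
    using R subspace_0[OF subspace_skew] unfolding alg_curv_op_def by blast
  then show ?case by simp
next
  case (insert x F)
  have "skew (\<Sum>x\<in>F. c x *\<^sub>R M x)" using insert by (intro skew_sum skew_scaleR) auto
  then have "R (c x *\<^sub>R M x + 1 *\<^sub>R (\<Sum>x\<in>F. c x *\<^sub>R M x))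
      = c x *\<^sub>R R (M x) + 1 *\<^sub>R R (\<Sum>x\<in>F. c x *\<^sub>R M x)"
    using R insert.prems unfolding alg_curv_op_def by blast
  then show ?case using insert by simp
qed

lemma skew_subset_span_wedge_e:
  assumes "inj (f :: 'n::finite \<Rightarrow> nat)"
  shows "{A::real^'n^'n. skew A} \<subseteq> span ((\<lambda>(a, b). wedge (e a) (e b)) ` {(a, b). f a < f b})"
    (is "_ \<subseteq> span ?W")
proof -
  have "wedge (e a) (e b) \<in> span ?W" for a b
  proof -
    consider "f a < f b" | "a = b" | "f b < f a"
      using assms by (metis injD linorder_neqE_nat)
    then show ?thesis
    proof cases
      case 1
      then show ?thesis by (intro span_base) auto
    next
      case 2
      then have "wedge (e a) (e b) = 0" by (simp add: wedge_def vec_eq_iff)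
      then show ?thesis by (simp add: span_zero)
    next
      case 3
      then have "wedge (e b) (e a) \<in> span ?W" by (intro span_base) auto
      moreover have "wedge (e a) (e b) = - wedge (e b) (e a)" by (simp add: wedge_def vec_eq_iff)
      ultimately show ?thesis by (simp add: span_neg)
    qed
  qed
  moreover have "A = (\<Sum>a\<in>UNIV. \<Sum>b\<in>UNIV. (- A $ a $ b / 2) *\<^sub>R wedge (e a) (e b))" if "skew A" for A
    using that by (rule skew_wedge_expansion)
  ultimately show ?thesis by (metis (no_types, lifting) mem_Collect_eq span_mul span_sum subsetI)
qed

lemma dim_skew: "dim {A::real^'n::finite^'n. skew A} \<le> CARD('n) choose 2"
proof -
  obtain f :: "'n \<Rightarrow> nat" where "inj f"
    using finite_imp_inj_to_nat_seg[of "UNIV::'n set"] by auto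
  define P where "P = {(a, b). f a < f b}"
  have "dim {A::real^'n^'n. skew A} \<le> card ((\<lambda>(a, b). wedge (e a) (e b)) ` P)"
    unfolding P_def by (rule dim_le_card[OF skew_subset_span_wedge_e[OF \<open>inj f\<close>]]) simp
  also have "\<dots> \<le> card P" by (rule card_image_le) simp
  also have "\<dots> \<le> card {B. B \<subseteq> (UNIV::'n set) \<and> card B = 2}"
  proof (rule card_inj_on_le)
    show "inj_on (\<lambda>(a, b). {a, b}) P"
      unfolding P_def by (auto intro!: inj_onI simp: doubleton_eq_iff)
    show "(\<lambda>(a, b). {a, b}) ` P \<subseteq> {B. B \<subseteq> UNIV \<and> card B = 2}"
      unfolding P_def by (auto simp: card_2_iff)
  qed simp
  also have "\<dots> = CARD('n) choose 2" using n_subsets[of "UNIV::'n set" 2] by simp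
  finally show ?thesis .
qed

lemma skew_subset_span_orthonormal:
  fixes \<Xi> :: "nat \<Rightarrow> real^'n::finite^'n"
  assumes \<Xi>_skew: "\<And>\<alpha>. \<alpha> \<in> {1..N} \<Longrightarrow> skew (\<Xi> \<alpha>)"
    and \<Xi>_orthonormal: "\<And>\<alpha> \<beta>. \<alpha> \<in> {1..N} \<Longrightarrow> \<beta> \<in> {1..N} \<Longrightarrow>
                       lam_inner (\<Xi> \<alpha>) (\<Xi> \<beta>) = (if \<alpha> = \<beta> then 1 else 0)"
    and N: "CARD('n) choose 2 \<le> N"
  shows "{A. skew A} \<subseteq> span (\<Xi> ` {1..N})"
proof -
  have "\<Xi> ` {1..N} \<subseteq> {A. skew A}" using \<Xi>_skew by auto
  moreover have "independent (\<Xi> ` {1..N})"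
  proof (rule pairwise_orthogonal_independent)
    have "\<Xi> \<alpha> \<bullet> \<Xi> \<beta> = 0" if "\<alpha> \<in> {1..N}" "\<beta> \<in> {1..N}" "\<alpha> \<noteq> \<beta>" for \<alpha> \<beta>
      using \<Xi>_orthonormal[OF that(1,2)] that(3) by (simp add: lam_inner_eq_inner)
    then show "pairwise orthogonal (\<Xi> ` {1..N})"
      unfolding pairwise_def orthogonal_def by blast
    show "0 \<notin> \<Xi> ` {1..N}"
      using \<Xi>_orthonormal by (force simp: lam_inner_eq_inner)
  qed
  moreover have "inj_on \<Xi> {1..N}"
    by (rule inj_onI) (metis \<Xi>_orthonormal one_neq_zero)
  then have "dim {A::real^'n^'n. skew A} \<le> card (\<Xi> ` {1..N})"
    using order_trans[OF dim_skew N] by (simp add: card_image)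
  ultimately show ?thesis by (rule card_ge_dim_independent)
qed

lemma skew_orthonormal_expansion:
  fixes \<Xi> :: "nat \<Rightarrow> real^'n::finite^'n"
  assumes \<Xi>_skew: "\<And>\<alpha>. \<alpha> \<in> {1..N} \<Longrightarrow> skew (\<Xi> \<alpha>)"
    and \<Xi>_orthonormal: "\<And>\<alpha> \<beta>. \<alpha> \<in> {1..N} \<Longrightarrow> \<beta> \<in> {1..N} \<Longrightarrow>
                       lam_inner (\<Xi> \<alpha>) (\<Xi> \<beta>) = (if \<alpha> = \<beta> then 1 else 0)"
    and N: "CARD('n) choose 2 \<le> N" and "skew H"
  shows "H = (\<Sum>\<alpha>=1..N. lam_inner (\<Xi> \<alpha>) H *\<^sub>R \<Xi> \<alpha>)"
proof -
  define r where "r = H - (\<Sum>\<alpha>=1..N. lam_inner (\<Xi> \<alpha>) H *\<^sub>R \<Xi> \<alpha>)"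
  have "H \<in> span (\<Xi> ` {1..N})"
    using skew_subset_span_orthonormal[OF \<Xi>_skew \<Xi>_orthonormal N] \<open>skew H\<close> by blast
  then have "r \<in> span (\<Xi> ` {1..N})" unfolding r_def
    by (rule span_diff) (intro span_sum span_mul span_base; simp)
  moreover have r_orthogonal: "orthogonal r (\<Xi> \<beta>)" if "\<beta> \<in> {1..N}" for \<beta>
  proof -
    have "lam_inner (\<Xi> \<beta>) r
        = lam_inner (\<Xi> \<beta>) H - (\<Sum>\<alpha>=1..N. lam_inner (\<Xi> \<alpha>) H * lam_inner (\<Xi> \<beta>) (\<Xi> \<alpha>))"
      by (simp add: r_def lam_inner_eq_inner inner_diff_right inner_sum_right sum_divide_distrib
          diff_divide_distrib)
    also have "\<dots> = lam_inner (\<Xi> \<beta>) H - (\<Sum>\<alpha>=1..N. if \<alpha> = \<beta> then lam_inner (\<Xi> \<alpha>) H else 0)"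
      using \<Xi>_orthonormal that by (intro arg_cong2[where f=minus] refl sum.cong) auto
    also have "\<dots> = 0" using that by simp
    finally show ?thesis by (simp add: orthogonal_def lam_inner_eq_inner inner_commute)
  qed
  ultimately have "orthogonal r r"
    by (intro orthogonal_to_span[of r "\<Xi> ` {1..N}"]) (auto simp: r_orthogonal)
  then show ?thesis by (simp add: r_def orthogonal_def)
qed

definition curv_eigenbasis ::
  "(real^'n::finite^'n \<Rightarrow> real^'n^'n) \<Rightarrow> (nat \<Rightarrow> real) \<Rightarrow> (nat \<Rightarrow> real^'n^'n) \<Rightarrow> bool" where
  "curv_eigenbasis R lam \<Xi> \<longleftrightarrow>
     (\<forall>\<alpha>\<in>{1..CARD('n) choose 2}. skew (\<Xi> \<alpha>) \<and> R (\<Xi> \<alpha>) = lam \<alpha> *\<^sub>R \<Xi> \<alpha>) \<and>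
     (\<forall>\<alpha>\<in>{1..CARD('n) choose 2}. \<forall>\<beta>\<in>{1..CARD('n) choose 2}.
        lam_inner (\<Xi> \<alpha>) (\<Xi> \<beta>) = (if \<alpha> = \<beta> then 1 else 0))"

lemma curv_eigenvalues_iff:
  "curv_eigenvalues R lam \<longleftrightarrow>
     (\<forall>i j. 1 \<le> i \<longrightarrow> i \<le> j \<longrightarrow> j \<le> CARD('n) choose 2 \<longrightarrow> lam i \<le> lam j) \<and>
     (\<exists>\<Xi>. curv_eigenbasis R lam (\<Xi> :: nat \<Rightarrow> real^'n::finite^'n))"
  by (simp add: curv_eigenvalues_def curv_eigenbasis_def Let_def)

lemma curv_eigenbasis_expansion:
  fixes R :: "real^'n::finite^'n \<Rightarrow> real^'n^'n"
  assumes "curv_eigenbasis R lam \<Xi>" "skew H"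
  shows "H = (\<Sum>\<alpha>=1..CARD('n) choose 2. lam_inner (\<Xi> \<alpha>) H *\<^sub>R \<Xi> \<alpha>)"
  using assms by (intro skew_orthonormal_expansion) (auto simp: curv_eigenbasis_def)

lemma curv_eigenbasis_parseval:
  fixes R :: "real^'n::finite^'n \<Rightarrow> real^'n^'n"
  assumes "curv_eigenbasis R lam \<Xi>" "skew H"
  shows "lam_inner H H = (\<Sum>\<alpha>=1..CARD('n) choose 2. (lam_inner (\<Xi> \<alpha>) H)\<^sup>2)"
proof -
  have "lam_inner H H = lam_inner (\<Sum>\<alpha>=1..CARD('n) choose 2. lam_inner (\<Xi> \<alpha>) H *\<^sub>R \<Xi> \<alpha>) H"
    using curv_eigenbasis_expansion[OF assms] by simp
  then show ?thesis
    by (simp add: lam_inner_eq_inner inner_sum_left sum_divide_distrib power2_eq_square)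
qed

lemma curv_eigenbasis_quadratic_form:
  fixes R :: "real^'n::finite^'n \<Rightarrow> real^'n^'n"
  assumes R: "alg_curv_op R" and \<Xi>: "curv_eigenbasis R lam \<Xi>" and "skew H"
  shows "lam_inner (R H) H = (\<Sum>\<alpha>=1..CARD('n) choose 2. lam \<alpha> * (lam_inner (\<Xi> \<alpha>) H)\<^sup>2)"
proof -
  let ?N = "CARD('n) choose 2"
  have "R H = R (\<Sum>\<alpha>=1..?N. lam_inner (\<Xi> \<alpha>) H *\<^sub>R \<Xi> \<alpha>)"
    using curv_eigenbasis_expansion[OF \<Xi> \<open>skew H\<close>] by simp
  also have "\<dots> = (\<Sum>\<alpha>=1..?N. lam_inner (\<Xi> \<alpha>) H *\<^sub>R R (\<Xi> \<alpha>))"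
    using \<Xi> by (intro alg_curv_op_sum[OF R]) (auto simp: curv_eigenbasis_def)
  also have "\<dots> = (\<Sum>\<alpha>=1..?N. (lam \<alpha> * lam_inner (\<Xi> \<alpha>) H) *\<^sub>R \<Xi> \<alpha>)"
    using \<Xi> by (intro sum.cong refl) (simp add: curv_eigenbasis_def)
  finally show ?thesis
    by (simp add: lam_inner_eq_inner inner_sum_left sum_divide_distrib power2_eq_square mult_ac)
qed

lemma hat_norm2_eq_sum_eigenbasis:
  fixes R :: "real^'n::finite^'n \<Rightarrow> real^'n^'n"
  assumes "curv_eigenbasis R lam \<Xi>" "tensor k T"
  shows "hat_norm2 k T = (\<Sum>\<alpha>=1..CARD('n) choose 2. tnorm2 k (act (\<Xi> \<alpha>) T))"
proof -
  have "hat_norm2 k T = (\<Sum>is | length is = k. \<Sum>\<alpha>=1..CARD('n) choose 2. (act (\<Xi> \<alpha>) T (map e is))\<^sup>2)"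
    using assms by (auto simp: hat_norm2_def curv_eigenbasis_parseval skew_hat
        act_eq_lam_inner_hat curv_eigenbasis_def intro!: sum.cong)
  also have "\<dots> = (\<Sum>\<alpha>=1..CARD('n) choose 2. \<Sum>is | length is = k. (act (\<Xi> \<alpha>) T (map e is))\<^sup>2)"
    by (rule sum.swap)
  finally show ?thesis by (simp add: tnorm2_def)
qed

lemma curv_pairing_eq_sum_eigenbasis:
  fixes R :: "real^'n::finite^'n \<Rightarrow> real^'n^'n"
  assumes "alg_curv_op R" "curv_eigenbasis R lam \<Xi>" "tensor k T"
  shows "curv_pairing R k T
    = (\<Sum>\<alpha>=1..CARD('n) choose 2. lam \<alpha> * tnorm2 k (act (\<Xi> \<alpha>) T))"
proof -
  have "curv_pairing R k T
      = (\<Sum>is | length is = k. \<Sum>\<alpha>=1..CARD('n) choose 2. lam \<alpha> * (act (\<Xi> \<alpha>) T (map e is))\<^sup>2)"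
    using assms by (auto simp: curv_pairing_def curv_eigenbasis_quadratic_form skew_hat
        act_eq_lam_inner_hat curv_eigenbasis_def intro!: sum.cong)
  also have "\<dots> = (\<Sum>\<alpha>=1..CARD('n) choose 2. \<Sum>is | length is = k. lam \<alpha> * (act (\<Xi> \<alpha>) T (map e is))\<^sup>2)"
    by (rule sum.swap)
  finally show ?thesis by (simp add: tnorm2_def sum_distrib_left)
qed

text \<open>Compare every \<open>lam \<alpha>\<close> with \<open>\<mu> = lam m\<close>: the indices \<open>\<alpha> \<le> m\<close> have
  \<open>lam \<alpha> \<le> \<mu>\<close> and weight at most \<open>W / C\<close>, the others have \<open>lam \<alpha> \<ge> \<mu>\<close>.\<close>

lemma sum_weighted_ge_mean_of_smallest:
  fixes lam w :: "nat \<Rightarrow> real"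
  assumes mono: "\<And>i j. 1 \<le> i \<Longrightarrow> i \<le> j \<Longrightarrow> j \<le> N \<Longrightarrow> lam i \<le> lam j"
    and w_nonneg: "\<And>\<alpha>. \<alpha> \<in> {1..N} \<Longrightarrow> 0 \<le> w \<alpha>"
    and w_le: "\<And>\<alpha>. \<alpha> \<in> {1..N} \<Longrightarrow> w \<alpha> \<le> W / C"
    and W: "W = (\<Sum>\<alpha>=1..N. w \<alpha>)"
    and m: "1 \<le> m" "m \<le> N" "real m \<le> C"
  shows "W * (\<Sum>i=1..m. lam i) / m \<le> (\<Sum>\<alpha>=1..N. lam \<alpha> * w \<alpha>)"
proof -
  define \<mu> where "\<mu> = lam m"
  define S where "S = (\<Sum>i=1..m. lam i)"
  have "(\<Sum>\<alpha>=1..N. lam \<alpha> * w \<alpha>) - \<mu> * W = (\<Sum>\<alpha>=1..N. (lam \<alpha> - \<mu>) * w \<alpha>)"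
    by (simp add: W sum_distrib_left sum_subtractf left_diff_distrib)
  also have "\<dots> = (\<Sum>\<alpha>=1..m. (lam \<alpha> - \<mu>) * w \<alpha>) + (\<Sum>\<alpha>=m+1..N. (lam \<alpha> - \<mu>) * w \<alpha>)"
    using sum.ub_add_nat[of 1 m _ "N - m"] m by simp
  also have "(\<Sum>\<alpha>=m+1..N. (lam \<alpha> - \<mu>) * w \<alpha>) \<ge> 0"
    using mono m w_nonneg by (intro sum_nonneg mult_nonneg_nonneg) (auto simp: \<mu>_def)
  moreover have "(\<Sum>\<alpha>=1..m. (lam \<alpha> - \<mu>) * w \<alpha>) \<ge> (\<Sum>\<alpha>=1..m. (lam \<alpha> - \<mu>) * (W / C))"
    using mono m w_le by (intro sum_mono mult_left_mono_neg) (auto simp: \<mu>_def)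
  moreover have "(\<Sum>\<alpha>=1..m. (lam \<alpha> - \<mu>) * (W / C)) = (S - m * \<mu>) * (W / C)"
    by (simp only: S_def flip: sum_distrib_right) (simp add: sum_subtractf)
  ultimately have "(\<Sum>\<alpha>=1..N. lam \<alpha> * w \<alpha>) \<ge> \<mu> * W + (S - m * \<mu>) * (W / C)"
    by linarith
  moreover have "\<mu> * W + (S - m * \<mu>) * (W / C) - W * S / m = W * (m * \<mu> - S) * (C - m) / (m * C)"
    using m by (simp add: field_simps)
  moreover have "0 \<le> W * (m * \<mu> - S) * (C - m) / (m * C)"
  proof -
    have "W \<ge> 0" unfolding W using w_nonneg by (intro sum_nonneg) auto
    moreover have "S \<le> m * \<mu>"
      using sum_mono[of "{1..m}" lam "\<lambda>_. \<mu>"] mono m by (simp add: S_def \<mu>_def)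
    ultimately show ?thesis using m by simp
  qed
  ultimately show ?thesis by (simp add: S_def)
qed

lemma sum_weighted_ge_mean_of_smallest':
  fixes lam w :: "nat \<Rightarrow> real"
  assumes mono: "\<And>i j. 1 \<le> i \<Longrightarrow> i \<le> j \<Longrightarrow> j \<le> N \<Longrightarrow> lam i \<le> lam j"
    and w_nonneg: "\<And>\<alpha>. \<alpha> \<in> {1..N} \<Longrightarrow> 0 \<le> w \<alpha>"
    and w_le: "\<And>\<alpha>. \<alpha> \<in> {1..N} \<Longrightarrow> w \<alpha> \<le> W / C"
    and W: "W = (\<Sum>\<alpha>=1..N. w \<alpha>)"
    and m: "1 \<le> m" "real m \<le> C"
  shows "W * (\<Sum>i=1..m. lam i) / m \<le> (\<Sum>\<alpha>=1..N. lam \<alpha> * w \<alpha>)"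
proof (cases "W = 0")
  case True
  then have "w \<alpha> = 0" if "\<alpha> \<in> {1..N}" for \<alpha>
    using w_nonneg[OF that] w_le[OF that] by simp
  then show ?thesis using True by simp
next
  case False
  have "W \<ge> 0" unfolding W using w_nonneg by (intro sum_nonneg) auto
  with False have "W > 0" by simp
  have "W \<le> (\<Sum>\<alpha>=1..N. W / C)"
    unfolding W using w_le by (intro sum_mono) (simp add: W)
  then have "W * C \<le> W * N"
    using m by (simp add: field_simps)
  then have "C \<le> N" using \<open>W > 0\<close> by simp
  then have "m \<le> N" using m by linarith
  then show ?thesis
    using sum_weighted_ge_mean_of_smallest[of N lam w W C m] mono w_nonneg w_le W m by blast
qed

lemma hat_norm2_nonneg: "0 \<le> hat_norm2 k T"
  by (simp add: hat_norm2_def lam_inner_eq_inner sum_nonneg)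

lemma hat_norm2_pos:
  fixes T :: "(real^'n::finite) list \<Rightarrow> real"
  assumes T: "tensor k T" and "length Xs = k" "hat T Xs \<noteq> 0"
  shows "0 < hat_norm2 k T"
proof -
  define L where "L = hat T Xs"
  have "act L T Xs = lam_inner L L"
    unfolding L_def by (rule act_eq_lam_inner_hat[OF skew_hat T \<open>length Xs = k\<close>])
  moreover have "lam_inner L L \<noteq> 0" using \<open>hat T Xs \<noteq> 0\<close> by (simp add: L_def lam_inner_eq_inner)
  ultimately have "act L T Xs \<noteq> 0" by simp
  then obtain ids where "length ids = k" "act L T (map e ids) \<noteq> 0"
    using tensor_eq_0_if_eq_0_on_basis[OF tensor_act[OF T] _ \<open>length Xs = k\<close>] by blast
  moreover have "act L T (map e ids) = lam_inner L (hat T (map e ids))"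
    using \<open>length ids = k\<close> unfolding L_def by (intro act_eq_lam_inner_hat[OF skew_hat T]) simp
  ultimately have "0 < lam_inner (hat T (map e ids)) (hat T (map e ids))"
    by (auto simp: lam_inner_eq_inner)
  also have "\<dots> \<le> hat_norm2 k T"
    unfolding hat_norm2_def using \<open>length ids = k\<close> finite_lists_length_eq[of "UNIV::'n set" k]
    by (intro member_le_sum) (auto simp: lam_inner_eq_inner)
  finally show ?thesis .
qed

lemma curv_pairing_ge_mean_of_smallest:
  fixes R :: "real^'n::finite^'n \<Rightarrow> real^'n^'n"
  assumes R: "alg_curv_op R" and lam: "curv_eigenvalues R lam" and T: "tensor k T"
    and bound: "\<forall>L. skew L \<longrightarrow> tnorm2 k (act L T) \<le> (1 / C) * hat_norm2 k T * lam_inner L L"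
    and m: "1 \<le> m" "real m \<le> C"
  shows "hat_norm2 k T * (\<Sum>i=1..m. lam i) / m \<le> curv_pairing R k T"
proof -
  obtain \<Xi> where \<Xi>: "curv_eigenbasis R lam \<Xi>"
    and mono: "\<And>i j. 1 \<le> i \<Longrightarrow> i \<le> j \<Longrightarrow> j \<le> CARD('n) choose 2 \<Longrightarrow> lam i \<le> lam j"
    using lam by (auto simp: curv_eigenvalues_iff)
  have le: "tnorm2 k (act (\<Xi> \<alpha>) T) \<le> hat_norm2 k T / C" if "\<alpha> \<in> {1..CARD('n) choose 2}" for \<alpha>
  proof -
    have "skew (\<Xi> \<alpha>)" "lam_inner (\<Xi> \<alpha>) (\<Xi> \<alpha>) = 1"
      using \<Xi> that by (simp_all add: curv_eigenbasis_def)
    then show ?thesis using bound[rule_format, of "\<Xi> \<alpha>"] by simp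
  qed
  have nonneg: "0 \<le> tnorm2 k (act (\<Xi> \<alpha>) T)" for \<alpha>
    by (simp add: tnorm2_def sum_nonneg)
  show ?thesis
    using sum_weighted_ge_mean_of_smallest'[OF _ _ _ hat_norm2_eq_sum_eigenbasis[OF \<Xi> T] m] mono nonneg le
    by (simp add: curv_pairing_eq_sum_eigenbasis[OF R \<Xi> T])
qed

theorem lemma2p1:
  fixes R :: "real^'n::finite^'n \<Rightarrow> real^'n^'n"
    and lam :: "nat \<Rightarrow> real"
    and T :: "(real^'n) list \<Rightarrow> real"
    and k :: nat and C \<kappa> :: real
  assumes "alg_curv_op R"
    and "curv_eigenvalues R lam"
    and "tensor k T"
    and "C \<ge> 1"
    and "\<forall>L. skew L \<longrightarrow> tnorm2 k (act L T) \<le> (1 / C) * hat_norm2 k T * lam_inner L L"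
    and "\<kappa> \<le> 0"
  shows "((1 / real (nat \<lfloor>C\<rfloor>)) * (\<Sum>i=1..nat \<lfloor>C\<rfloor>. lam i) \<ge> \<kappa>
            \<longrightarrow> curv_pairing R k T \<ge> \<kappa> * hat_norm2 k T)
       \<and> ((\<Sum>i=1..nat \<lfloor>C\<rfloor>. lam i) > 0
            \<longrightarrow> (\<exists>Xs. length Xs = k \<and> hat T Xs \<noteq> 0) \<longrightarrow> curv_pairing R k T > 0)"
proof -
  define m where "m = nat \<lfloor>C\<rfloor>"
  have m: "1 \<le> m" "real m \<le> C" using \<open>C \<ge> 1\<close> by (simp_all add: m_def) linarith+
  have main: "hat_norm2 k T * (\<Sum>i=1..m. lam i) / m \<le> curv_pairing R k T"
    using curv_pairing_ge_mean_of_smallest[OF assms(1-3,5) m] .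
  show ?thesis
  proof (intro conjI impI; fold m_def)
    assume "\<kappa> \<le> 1 / real m * (\<Sum>i=1..m. lam i)"
    then have "\<kappa> * hat_norm2 k T \<le> (1 / real m * (\<Sum>i=1..m. lam i)) * hat_norm2 k T"
      by (rule mult_right_mono[OF _ hat_norm2_nonneg])
    then have "\<kappa> * hat_norm2 k T \<le> hat_norm2 k T * (\<Sum>i=1..m. lam i) / m"
      by (simp add: mult.commute)
    then show "\<kappa> * hat_norm2 k T \<le> curv_pairing R k T" using main by linarith
  next
    assume "0 < (\<Sum>i=1..m. lam i)" and "\<exists>Xs. length Xs = k \<and> hat T Xs \<noteq> 0"
    then have "0 < hat_norm2 k T * (\<Sum>i=1..m. lam i) / m"
      using hat_norm2_pos[OF assms(3)] m by auto
    then show "0 < curv_pairing R k T" using main by linarith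
  qed
qed

end
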